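(* With the notation of the context, the $\bm\phi$-twisted exterior derivative satisfies $\hat d\circ\hat d=0$.
   Context: $\mathfrak{g}$ is an $n$-dimensional Lie algebra over a field $\bm k$ of characteristic zero with basis $\hat x_1,\dots,\hat x_n$ and $U(\mathfrak{g})$ its enveloping algebra; $S(\mathfrak{g})=\bm k[x_1,\dots,x_n]$; $\hat S(\mathfrak{g}^* )=\bm k[[\partial^1,\dots,\partial^n]]$. $\bm\phi:\mathfrak{g}\to\operatorname{Der}(\hat S(\mathfrak{g}^* ))$ is a Lie algebra homomorphism with $\phi^j_i:=\bm\phi(-\hat x_i)(\partial^j)$ such that $(\phi^j_i)$ reduces to the identity when all $\partial^j=0$. $\hat A_{n,\bm k}$ is the semicompleted Weyl algebra (underlying space $S(\mathfrak{g})\otimes\hat S(\mathfrak{g}^* )$, relations $[\partial^i,x_j]=\delta^i_j$), acting on $S(\mathfrak{g})$ with $x_j$ by multiplication and $\partial^j$ by $\partial/\partial x_j$. The algebra map $U(\mathfrak{g})\to\hat A_{n,\bm k}$, $u\mapsto u^\phi$, is determined by $\hat x_i\mapsto\sum_j x_j\phi^j_i$; $u\mapsto u^\phi\triangleright1$ is a linear bijection $U(\mathfrak{g})\to S(\mathfrak{g})$ with inverse $\xi$, and $\hat\partial^j:=\xi\circ\frac{\partial}{\partial x_j}\circ\xi^{-1}$. $\Lambda^*(\mathfrak{g})$ is the exterior algebra on generators $dx_1,\dots,dx_n$. The twisted exterior derivative $\hat d$ is the linear operator on $\Lambda^*(\mathfrak{g})\otimes U(\mathfrak{g})\otimes\hat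 S(\mathfrak{g}^* )$ (the underlying space of the algebra $\Lambda^*(\mathfrak{g})\otimes(U(\mathfrak{g})\sharp\hat S(\mathfrak{g}^* ))$) given by $\hat d(\omega\otimes u\otimes P)=\sum_j(dx_j\wedge\omega)\otimes\hat\partial^j(u)\otimes P$; equivalently $\hat d=\sum_{k,j}d\hat x_k(\phi^{-1})^k_j\hat\partial^j$ with $d\hat x_k=\sum_j dx_j\phi^j_k$. *)

theory Defs
  imports Main "HOL-Library.Function_Algebras"
begin

text \<open>The basis index set of the n-dimensional Lie algebra g is a finite
linearly ordered type 'n (n = CARD('n)).
Polynomials in S(g) = k[x_1..x_n] and formal power series in
S^(g*) = k[[d^1..d^n]] are both represented by their coefficient functions
('n => nat) => 'k (polynomials: finite support).\<close>

definition unitv :: "'n \<Rightarrow> 'n \<Rightarrow> nat" where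
  "unitv j = (\<lambda>i. if i = j then 1 else 0)"

definition fin_supp :: "('a \<Rightarrow> 'k::zero) \<Rightarrow> bool" where
  "fin_supp f \<longleftrightarrow> finite {a. f a \<noteq> 0}"

definition ps_mult :: "(('n::finite \<Rightarrow> nat) \<Rightarrow> 'k::comm_ring_1) \<Rightarrow> (('n \<Rightarrow> nat) \<Rightarrow> 'k)
    \<Rightarrow> ('n \<Rightarrow> nat) \<Rightarrow> 'k" where
  "ps_mult P Q \<gamma> = (\<Sum>\<alpha>\<in>{\<alpha>. \<alpha> \<le> \<gamma>}. P \<alpha> * Q (\<gamma> - \<alpha>))"

definition ps_deriv :: "'n \<Rightarrow> (('n \<Rightarrow> nat) \<Rightarrow> 'k::comm_ring_1) \<Rightarrow> ('n \<Rightarrow> nat) \<Rightarrow> 'k" where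
  "ps_deriv j P \<gamma> = of_nat (\<gamma> j + 1) * P (\<gamma> + unitv j)"

text \<open>The derivation phi(x^_i) of S^(g*): it sends d^l to -phi^l_i, i.e.
  phi(x^_i) = - sum_l phi^l_i * d/d(d^l).  Here  phi j i  stands for phi^j_i.\<close>
definition phi_der :: "('n::finite \<Rightarrow> 'n \<Rightarrow> ('n \<Rightarrow> nat) \<Rightarrow> 'k::comm_ring_1) \<Rightarrow> 'n
    \<Rightarrow> (('n \<Rightarrow> nat) \<Rightarrow> 'k) \<Rightarrow> ('n \<Rightarrow> nat) \<Rightarrow> 'k" where
  "phi_der phi i P = (\<lambda>\<gamma>. - (\<Sum>l\<in>UNIV. ps_mult (phi l i) (ps_deriv l P) \<gamma>))"

text \<open>Structure constants of a Lie algebra w.r.t. the basis: [x^_a, x^_b] = sum_k c a b k x^_k.\<close>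
definition lie_structure_constants :: "('n::finite \<Rightarrow> 'n \<Rightarrow> 'n \<Rightarrow> 'k::field) \<Rightarrow> bool" where
  "lie_structure_constants c \<longleftrightarrow>
     (\<forall>a b k. c a b k = - c b a k) \<and>
     (\<forall>a b d m. (\<Sum>k\<in>UNIV. c a b k * c k d m + c b d k * c k a m + c d a k * c k b m) = 0)"

definition lie_hom_into_der ::
  "('n::finite \<Rightarrow> 'n \<Rightarrow> 'n \<Rightarrow> 'k::field) \<Rightarrow> ('n \<Rightarrow> 'n \<Rightarrow> ('n \<Rightarrow> nat) \<Rightarrow> 'k) \<Rightarrow> bool" where
  "lie_hom_into_der c phi \<longleftrightarrow>
     (\<forall>a b P. phi_der phi a (phi_der phi b P) - phi_der phi b (phi_der phi a P)
              = (\<Sum>k\<in>UNIV. (\<lambda>\<gamma>. c a b k * phi_der phi k P \<gamma>)))"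

definition poly_one :: "('n \<Rightarrow> nat) \<Rightarrow> 'k::zero_neq_one" where
  "poly_one \<gamma> = (if \<gamma> = 0 then 1 else 0)"

definition x_mult :: "'n \<Rightarrow> (('n \<Rightarrow> nat) \<Rightarrow> 'k::zero) \<Rightarrow> ('n \<Rightarrow> nat) \<Rightarrow> 'k" where
  "x_mult j f \<gamma> = (if \<gamma> j = 0 then 0 else f (\<gamma> - unitv j))"

definition poly_deriv :: "'n \<Rightarrow> (('n \<Rightarrow> nat) \<Rightarrow> 'k::comm_ring_1) \<Rightarrow> ('n \<Rightarrow> nat) \<Rightarrow> 'k" where
  "poly_deriv j f \<gamma> = of_nat (\<gamma> j + 1) * f (\<gamma> + unitv j)"

text \<open>Action of a power series P(d) on a polynomial f, with d^j acting as d/dx_j: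
  d^beta x^(gamma+beta) = ((gamma+beta)!/gamma!) x^gamma.\<close>
definition ps_act :: "(('n::finite \<Rightarrow> nat) \<Rightarrow> 'k::comm_ring_1) \<Rightarrow> (('n \<Rightarrow> nat) \<Rightarrow> 'k)
    \<Rightarrow> ('n \<Rightarrow> nat) \<Rightarrow> 'k" where
  "ps_act P f \<gamma> = (\<Sum>\<beta>\<in>{\<beta>. f (\<gamma> + \<beta>) \<noteq> 0}.
      P \<beta> * of_nat (\<Prod>i\<in>UNIV. (fact ((\<gamma> + \<beta>) i) :: nat) div fact (\<gamma> i)) * f (\<gamma> + \<beta>))"

text \<open>Action on S(g) of the Weyl algebra element x^_i^phi = sum_j x_j phi^j_i.\<close>
definition Dop :: "('n::finite \<Rightarrow> 'n \<Rightarrow> ('n \<Rightarrow> nat) \<Rightarrow> 'k::comm_ring_1) \<Rightarrow> 'n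
    \<Rightarrow> (('n \<Rightarrow> nat) \<Rightarrow> 'k) \<Rightarrow> ('n \<Rightarrow> nat) \<Rightarrow> 'k" where
  "Dop phi i f = (\<lambda>\<gamma>. \<Sum>j\<in>UNIV. x_mult j (ps_act (phi j i) f) \<gamma>)"

text \<open>U(g) is represented as the tensor algebra T(g) (finitely supported functions on words
  'n list => 'k, the word [i1,...,ik] standing for x^_i1 ... x^_ik) modulo the two-sided
  ideal UIdeal c generated by x^_a x^_b - x^_b x^_a - [x^_a,x^_b].
  Phi_map phi w = w^phi |> 1  (so Phi_map = xi^-1 on representatives).\<close>
definition Phi_map :: "('n::finite \<Rightarrow> 'n \<Rightarrow> ('n \<Rightarrow> nat) \<Rightarrow> 'k::comm_ring_1) \<Rightarrow> ('n list \<Rightarrow> 'k)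
    \<Rightarrow> ('n \<Rightarrow> nat) \<Rightarrow> 'k" where
  "Phi_map phi w = (\<lambda>\<gamma>. \<Sum>ws\<in>{ws. w ws \<noteq> 0}. w ws * foldr (Dop phi) ws poly_one \<gamma>)"

definition rel_gen :: "('n::finite \<Rightarrow> 'n \<Rightarrow> 'n \<Rightarrow> 'k::comm_ring_1) \<Rightarrow> 'n list \<Rightarrow> 'n \<Rightarrow> 'n
    \<Rightarrow> 'n list \<Rightarrow> 'n list \<Rightarrow> 'k" where
  "rel_gen c u a b v = (\<lambda>w. (if w = u @ [a, b] @ v then 1 else 0)
      - (if w = u @ [b, a] @ v then 1 else 0)
      - (\<Sum>k\<in>UNIV. c a b k * (if w = u @ [k] @ v then 1 else 0)))"

inductive_set UIdeal :: "('n::finite \<Rightarrow> 'n \<Rightarrow> 'n \<Rightarrow> 'k::comm_ring_1) \<Rightarrow> ('n list \<Rightarrow> 'k) set"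
  for c where
  zero: "(\<lambda>_. 0) \<in> UIdeal c"
| gen: "x \<in> UIdeal c \<Longrightarrow> (\<lambda>w. x w + r * rel_gen c u a b v w) \<in> UIdeal c"

text \<open>hat-d^j = xi o d/dx_j o xi^-1 (on representatives; xi picks some preimage).\<close>
definition hat_partial :: "('n::finite \<Rightarrow> 'n \<Rightarrow> ('n \<Rightarrow> nat) \<Rightarrow> 'k::comm_ring_1) \<Rightarrow> 'n
    \<Rightarrow> ('n list \<Rightarrow> 'k) \<Rightarrow> ('n list \<Rightarrow> 'k)" where
  "hat_partial phi j w = (SOME w'. fin_supp w' \<and> Phi_map phi w' = poly_deriv j (Phi_map phi w))"

text \<open>Exterior algebra: an element of Lambda*(g) (x) V is a function from subsets J of the
  index set to V (coefficient of dx_J, J in increasing order).  wedge_dx j computes dx_j /\ _.\<close>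
definition wedge_dx :: "'n::linorder \<Rightarrow> ('n set \<Rightarrow> 'v::ab_group_add) \<Rightarrow> 'n set \<Rightarrow> 'v" where
  "wedge_dx j F J = (if j \<in> J then
      (if even (card {i\<in>J. i < j}) then F (J - {j}) else - F (J - {j})) else 0)"

text \<open>Elements of Lambda*(g) (x) U(g) (x) S^(g*) are modelled as functions
  J (form index) => beta (power-series monomial) => representative in T(g).
  The twisted exterior derivative acts as identity on the S^(g*) factor.\<close>
definition twisted_d :: "('n::{finite,linorder} \<Rightarrow> 'n \<Rightarrow> ('n \<Rightarrow> nat) \<Rightarrow> 'k::comm_ring_1)
    \<Rightarrow> ('n set \<Rightarrow> ('n \<Rightarrow> nat) \<Rightarrow> 'n list \<Rightarrow> 'k) \<Rightarrow> 'n set \<Rightarrow> ('n \<Rightarrow> nat) \<Rightarrow> 'n list \<Rightarrow> 'k" where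
  "twisted_d phi F J \<beta> = (\<Sum>j\<in>UNIV. wedge_dx j (\<lambda>I. hat_partial phi j (F I \<beta>)) J)"

end

theory Submission
  imports Defs "HOL-Library.FuncSet"
begin

text \<open>Since \<open>hat_partial phi j\<close> is defined as \<open>\<xi> \<circ> \<partial>/\<partial>x\<^sub>j \<circ> \<xi>\<^sup>-\<^sup>1\<close>, the map
  \<open>\<xi>\<^sup>-\<^sup>1\<close> (\<open>Phi_map\<close>) conjugates the twisted exterior derivative into the ordinary exterior
  derivative of polynomial-valued forms. The latter squares to zero because partial derivatives
  commute while \<open>dx\<^sub>j \<and> dx\<^sub>k\<close> anticommutes. Hence \<open>\<xi>\<^sup>-\<^sup>1\<close> kills \<open>d\<^sup>2 F\<close>, i.e. its
  representative lies in the ideal defining \<open>U(g)\<close>.\<close>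

lemma sum_fun_apply: "(sum f A) x = (\<Sum>a\<in>A. f a x)"
  by (induction A rule: infinite_finite_induct) auto

lemma sum_sum_skew_eq_0:
  fixes A :: "'a \<Rightarrow> 'a \<Rightarrow> 'b::ab_group_add"
  assumes "finite S" and skew: "\<And>j k. A j k = - A k j" and diag: "\<And>j. A j j = 0"
  shows "(\<Sum>j\<in>S. \<Sum>k\<in>S. A j k) = 0"
  using \<open>finite S\<close>
proof (induction S rule: finite_induct)
  case (insert a S)
  have "(\<Sum>j\<in>insert a S. \<Sum>k\<in>insert a S. A j k)
      = A a a + (\<Sum>k\<in>S. A a k + A k a) + (\<Sum>j\<in>S. \<Sum>k\<in>S. A j k)"
    using insert.hyps by (simp add: sum.distrib algebra_simps)
  also have "\<dots> = 0"
    using insert.IH by (simp add: diag skew[of _ a])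
  finally show ?case .
qed simp

lemma fin_supp_zero: "fin_supp (0::_ \<Rightarrow> _::zero)"
  unfolding fin_supp_def by simp

lemma fin_supp_add: "fin_supp (f::_ \<Rightarrow> _::monoid_add) \<Longrightarrow> fin_supp g \<Longrightarrow> fin_supp (f + g)"
  unfolding fin_supp_def
  by (rule finite_subset[where B="{a. f a \<noteq> 0} \<union> {a. g a \<noteq> 0}"]) auto

lemma fin_supp_uminus: "fin_supp (f::_ \<Rightarrow> _::group_add) \<Longrightarrow> fin_supp (- f)"
  unfolding fin_supp_def by simp

lemma fin_supp_sum:
  "(\<And>a. a \<in> A \<Longrightarrow> fin_supp (f a::_ \<Rightarrow> _::comm_monoid_add)) \<Longrightarrow> fin_supp (sum f A)"
  by (induction A rule: infinite_finite_induct) (auto intro: fin_supp_add fin_supp_zero)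

lemma fin_supp_wedge_dx:
  "(\<And>I. fin_supp (F I::_ \<Rightarrow> _::ab_group_add)) \<Longrightarrow> fin_supp (wedge_dx j F J)"
  unfolding wedge_dx_def by (auto intro: fin_supp_uminus fin_supp_zero)

lemma finite_le_fun: "finite {\<gamma>::'n::finite \<Rightarrow> nat. \<gamma> \<le> s}"
proof (rule finite_subset)
  show "{\<gamma>::'n \<Rightarrow> nat. \<gamma> \<le> s} \<subseteq> PiE UNIV (\<lambda>i. {..s i})"
    by (auto simp: le_fun_def)
qed (rule finite_PiE, auto)

lemma fin_supp_ps_act:
  assumes "fin_supp f" shows "fin_supp (ps_act P f)"
proof -
  have "{\<gamma>. ps_act P f \<gamma> \<noteq> 0} \<subseteq> (\<Union>s\<in>{a. f a \<noteq> 0}. {\<gamma>. \<gamma> \<le> s})"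
  proof
    fix \<gamma> assume "\<gamma> \<in> {\<gamma>. ps_act P f \<gamma> \<noteq> 0}"
    then obtain \<beta> where "f (\<gamma> + \<beta>) \<noteq> 0"
      unfolding ps_act_def by (metis (mono_tags) Collect_empty_eq mem_Collect_eq sum.empty)
    moreover have "\<gamma> \<le> \<gamma> + \<beta>" by (simp add: le_fun_def)
    ultimately show "\<gamma> \<in> (\<Union>s\<in>{a. f a \<noteq> 0}. {\<gamma>. \<gamma> \<le> s})" by auto
  qed
  moreover have "finite (\<Union>s\<in>{a. f a \<noteq> 0}. {\<gamma>. \<gamma> \<le> s})"
    using assms unfolding fin_supp_def by (intro finite_UN_I finite_le_fun)
  ultimately show ?thesis
    unfolding fin_supp_def by (rule finite_subset)
qed

lemma fin_supp_x_mult: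
  assumes "fin_supp f" shows "fin_supp (x_mult j f)"
proof -
  have "{\<gamma>. x_mult j f \<gamma> \<noteq> 0} \<subseteq> (\<lambda>\<delta>. \<delta> + unitv j) ` {a. f a \<noteq> 0}"
  proof
    fix \<gamma> assume "\<gamma> \<in> {\<gamma>. x_mult j f \<gamma> \<noteq> 0}"
    then have "\<gamma> j \<noteq> 0" and "f (\<gamma> - unitv j) \<noteq> 0"
      unfolding x_mult_def by (auto split: if_splits)
    moreover from \<open>\<gamma> j \<noteq> 0\<close> have "\<gamma> = (\<gamma> - unitv j) + unitv j"
      by (auto simp: unitv_def fun_eq_iff)
    ultimately show "\<gamma> \<in> (\<lambda>\<delta>. \<delta> + unitv j) ` {a. f a \<noteq> 0}" by blast
  qed
  moreover have "finite ((\<lambda>\<delta>. \<delta> + unitv j) ` {a. f a \<noteq> 0})"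
    using assms unfolding fin_supp_def by (rule finite_imageI)
  ultimately show ?thesis
    unfolding fin_supp_def by (rule finite_subset)
qed

lemma fin_supp_Dop:
  assumes "fin_supp f" shows "fin_supp (Dop phi i f)"
proof -
  have "Dop phi i f = (\<Sum>j\<in>UNIV. x_mult j (ps_act (phi j i) f))"
    unfolding Dop_def by (simp add: fun_eq_iff sum_fun_apply)
  then show ?thesis
    using assms by (simp add: fin_supp_sum fin_supp_x_mult fin_supp_ps_act)
qed

lemma fin_supp_poly_one: "fin_supp poly_one"
  unfolding fin_supp_def poly_one_def by (rule finite_subset[where B="{0}"]) auto

lemma fin_supp_foldr_Dop: "fin_supp (foldr (Dop phi) ws poly_one)"
  by (induction ws) (simp_all add: fin_supp_Dop fin_supp_poly_one)

lemma fin_supp_Phi_map: "fin_supp (Phi_map phi w)"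
proof -
  have "fin_supp (\<lambda>\<gamma>. w ws * foldr (Dop phi) ws poly_one \<gamma>)" for ws
    using fin_supp_foldr_Dop[of phi ws] unfolding fin_supp_def
    by (rule rev_finite_subset) auto
  moreover have "Phi_map phi w
      = (\<Sum>ws\<in>{ws. w ws \<noteq> 0}. (\<lambda>\<gamma>. w ws * foldr (Dop phi) ws poly_one \<gamma>))"
    unfolding Phi_map_def by (simp add: fun_eq_iff sum_fun_apply)
  ultimately show ?thesis by (simp add: fin_supp_sum)
qed

lemma fin_supp_poly_deriv:
  assumes "fin_supp f" shows "fin_supp (poly_deriv j f)"
proof -
  have "finite ((\<lambda>\<gamma>. \<gamma> + unitv j) -` {a. f a \<noteq> 0})"
    using assms unfolding fin_supp_def by (rule finite_vimageI) (simp add: inj_on_def)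
  then show ?thesis
    unfolding fin_supp_def by (rule rev_finite_subset) (auto simp: poly_deriv_def)
qed

lemma Phi_map_eq_sum_superset:
  assumes "finite S" "{ws. w ws \<noteq> 0} \<subseteq> S"
  shows "Phi_map phi w \<gamma> = (\<Sum>ws\<in>S. w ws * foldr (Dop phi) ws poly_one \<gamma>)"
  unfolding Phi_map_def by (rule sum.mono_neutral_left[OF assms]) auto

lemma Phi_map_add:
  assumes "fin_supp a" "fin_supp b"
  shows "Phi_map phi (a + b) = Phi_map phi a + Phi_map phi b"
proof
  fix \<gamma>
  let ?S = "{ws. a ws \<noteq> 0} \<union> {ws. b ws \<noteq> 0}"
  have S: "finite ?S" using assms unfolding fin_supp_def by simp
  have "Phi_map phi (a + b) \<gamma> = (\<Sum>ws\<in>?S. (a + b) ws * foldr (Dop phi) ws poly_one \<gamma>)"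
    by (rule Phi_map_eq_sum_superset[OF S]) auto
  also have "\<dots> = Phi_map phi a \<gamma> + Phi_map phi b \<gamma>"
    by (simp add: distrib_right sum.distrib Phi_map_eq_sum_superset[OF S])
  finally show "Phi_map phi (a + b) \<gamma> = (Phi_map phi a + Phi_map phi b) \<gamma>" by simp
qed

lemma Phi_map_uminus: "Phi_map phi (- a) = - Phi_map phi a"
  unfolding Phi_map_def by (simp add: fun_eq_iff sum_negf)

lemma Phi_map_zero: "Phi_map phi 0 = 0"
  unfolding Phi_map_def by (simp add: fun_eq_iff)

lemma Phi_map_sum:
  "(\<And>x. x \<in> A \<Longrightarrow> fin_supp (f x)) \<Longrightarrow> Phi_map phi (sum f A) = (\<Sum>x\<in>A. Phi_map phi (f x))"
  by (induction A rule: infinite_finite_induct)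
    (auto simp: Phi_map_zero Phi_map_add fin_supp_sum)

lemma Phi_map_wedge_dx: "Phi_map phi (wedge_dx j F J) = wedge_dx j (\<lambda>I. Phi_map phi (F I)) J"
  unfolding wedge_dx_def by (simp add: Phi_map_uminus Phi_map_zero)

lemma poly_deriv_add: "poly_deriv j (f + g) = poly_deriv j f + poly_deriv j g"
  unfolding poly_deriv_def by (simp add: fun_eq_iff distrib_left)

lemma poly_deriv_commute: "poly_deriv j (poly_deriv k f) = poly_deriv k (poly_deriv j f)"
proof (cases "j = k")
  case False
  then have "(\<gamma> + unitv j) k = \<gamma> k" "(\<gamma> + unitv k) j = \<gamma> j" for \<gamma> :: "'a \<Rightarrow> nat"
    by (auto simp: unitv_def)
  then show ?thesis
    unfolding poly_deriv_def by (simp add: fun_eq_iff ac_simps)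
qed simp

lemma hat_partial_conj:
  assumes xi_surj: "\<forall>f. fin_supp f \<longrightarrow> (\<exists>w. fin_supp w \<and> Phi_map phi w = f)"
  shows "fin_supp (hat_partial phi j w) \<and>
    Phi_map phi (hat_partial phi j w) = poly_deriv j (Phi_map phi w)"
proof -
  have "\<exists>w'. fin_supp w' \<and> Phi_map phi w' = poly_deriv j (Phi_map phi w)"
    using xi_surj fin_supp_poly_deriv[OF fin_supp_Phi_map] by blast
  then show ?thesis
    unfolding hat_partial_def by (rule someI_ex)
qed

lemma wedge_dx_sum: "wedge_dx j (\<lambda>I. \<Sum>k\<in>A. f k I) J = (\<Sum>k\<in>A. wedge_dx j (f k) J)"
  unfolding wedge_dx_def by (simp add: sum_negf)

lemma wedge_dx_wedge_dx_same: "wedge_dx j (\<lambda>I. wedge_dx j X I) J = 0"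
  unfolding wedge_dx_def by simp

lemma wedge_dx_anticommute_less:
  fixes X :: "'n::{finite,linorder} set \<Rightarrow> 'v::ab_group_add"
  assumes "k < j"
  shows "wedge_dx j (\<lambda>I. wedge_dx k X I) J = - wedge_dx k (\<lambda>I. wedge_dx j X I) J"
proof (cases "j \<in> J \<and> k \<in> J")
  case True
  let ?a = "card {i\<in>J. i < j}"
  have "k \<in> {i\<in>J. i < j}" using True assms by simp
  then have "?a \<ge> 1" by (metis One_nat_def Suc_leI card_gt_0_iff empty_iff finite)
  then have parity: "even (?a - 1) \<longleftrightarrow> odd ?a" by (cases ?a) auto
  \<comment> \<open>Removing \<open>k\<close> shifts the position of \<open>j\<close> by one; removing \<open>j\<close> leaves that of \<open>k\<close> unchanged.\<close>
  have "{i\<in>J. i \<noteq> k \<and> i < j} = {i\<in>J. i < j} - {k}" by auto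
  then have card_j: "card {i\<in>J. i \<noteq> k \<and> i < j} = ?a - 1"
    using True assms by simp
  have card_k: "{i\<in>J. i \<noteq> j \<and> i < k} = {i\<in>J. i < k}" using assms by auto
  have "J - {j} - {k} = J - {k} - {j}" by auto
  then show ?thesis
    using True assms unfolding wedge_dx_def by (simp add: card_j card_k parity) blast
qed (use assms in \<open>auto simp: wedge_dx_def\<close>)

lemma wedge_dx_anticommute:
  fixes X :: "'n::{finite,linorder} set \<Rightarrow> 'v::ab_group_add"
  shows "wedge_dx j (\<lambda>I. wedge_dx k X I) J = - wedge_dx k (\<lambda>I. wedge_dx j X I) J"
proof (cases j k rule: linorder_cases)
  case less
  then show ?thesis using wedge_dx_anticommute_less[of j k X J] by (simp add: minus_equation_iff)
qed (simp_all add: wedge_dx_wedge_dx_same wedge_dx_anticommute_less)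

text \<open>\<open>twisted_d phi\<close> is \<open>ext_d (hat_partial phi)\<close> in each power-series degree, and the
  ordinary exterior derivative of polynomial-valued forms is \<open>ext_d poly_deriv\<close>.\<close>

definition ext_d :: "('n::{finite,linorder} \<Rightarrow> 'v \<Rightarrow> 'v::ab_group_add) \<Rightarrow> ('n set \<Rightarrow> 'v)
    \<Rightarrow> 'n set \<Rightarrow> 'v" where
  "ext_d D F J = (\<Sum>j\<in>UNIV. wedge_dx j (\<lambda>I. D j (F I)) J)"

lemma ext_d_ext_d:
  fixes D :: "'n::{finite,linorder} \<Rightarrow> 'v \<Rightarrow> 'v::ab_group_add"
  assumes add: "\<And>j x y. D j (x + y) = D j x + D j y"
    and commute: "\<And>j k x. D j (D k x) = D k (D j x)"
  shows "ext_d D (ext_d D F) = 0"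
proof
  fix J
  define A where "A j k = wedge_dx j (\<lambda>I. wedge_dx k (\<lambda>I'. D j (D k (F I'))) I) J" for j k
  have zero: "D j 0 = 0" for j
    using add[of j 0 0] by simp
  have uminus: "D j (- x) = - D j x" for j x
    using add[of j x "- x"] by (simp add: zero minus_unique)
  have sum: "D j (sum f S) = (\<Sum>k\<in>S. D j (f k))" for j f and S :: "'n set"
    using sum_comp_morphism[of "D j" f S] by (simp add: zero add o_def)
  have wedge: "D j (wedge_dx k G I) = wedge_dx k (\<lambda>I'. D j (G I')) I" for j k :: 'n and G I
    unfolding wedge_dx_def by (simp add: zero uminus)
  have "ext_d D (ext_d D F) J = (\<Sum>j\<in>UNIV. \<Sum>k\<in>UNIV. A j k)"
    unfolding ext_d_def A_def by (simp only: sum wedge wedge_dx_sum)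
  also have "\<dots> = 0"
  proof (rule sum_sum_skew_eq_0)
    show "A j k = - A k j" for j k
      unfolding A_def by (subst wedge_dx_anticommute) (simp only: commute)
  qed (simp_all add: A_def wedge_dx_wedge_dx_same)
  finally show "ext_d D (ext_d D F) J = 0 J" by simp
qed

lemma Phi_map_ext_d:
  assumes conj: "\<And>j w. fin_supp w \<Longrightarrow>
      fin_supp (D j w) \<and> Phi_map phi (D j w) = E j (Phi_map phi w)"
    and F: "\<And>I. fin_supp (F I)"
  shows "fin_supp (ext_d D F J) \<and>
    Phi_map phi (ext_d D F J) = ext_d E (\<lambda>I. Phi_map phi (F I)) J"
proof
  have terms: "fin_supp (wedge_dx j (\<lambda>I. D j (F I)) J)" for j
    using conj[OF F] by (intro fin_supp_wedge_dx) blast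
  then show "fin_supp (ext_d D F J)"
    unfolding ext_d_def by (intro fin_supp_sum)
  show "Phi_map phi (ext_d D F J) = ext_d E (\<lambda>I. Phi_map phi (F I)) J"
    unfolding ext_d_def
    by (simp only: Phi_map_sum[OF terms] Phi_map_wedge_dx conj[OF F, THEN conjunct2])
qed

lemma twisted_d_eq_ext_d: "twisted_d phi F J \<beta> = ext_d (hat_partial phi) (\<lambda>I. F I \<beta>) J"
  unfolding twisted_d_def ext_d_def ..

theorem theorem3p4:
  fixes c :: "'n::{finite,linorder} \<Rightarrow> 'n \<Rightarrow> 'n \<Rightarrow> 'k::field_char_0"
    and phi :: "'n \<Rightarrow> 'n \<Rightarrow> ('n \<Rightarrow> nat) \<Rightarrow> 'k"
  assumes lie: "lie_structure_constants c"
    and hom: "lie_hom_into_der c phi"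
    and ident: "\<forall>i j. phi j i 0 = (if j = i then 1 else 0)"
    and xi_inj: "\<forall>w. fin_supp w \<longrightarrow> (Phi_map phi w = 0 \<longleftrightarrow> w \<in> UIdeal c)"
    and xi_surj: "\<forall>f. fin_supp f \<longrightarrow> (\<exists>w. fin_supp w \<and> Phi_map phi w = f)"
  shows "\<forall>F. (\<forall>J \<beta>. fin_supp (F J \<beta>)) \<longrightarrow>
           (\<forall>J \<beta>. twisted_d phi (twisted_d phi F) J \<beta> \<in> UIdeal c)"
proof (intro allI impI)
  fix F :: "'n set \<Rightarrow> ('n \<Rightarrow> nat) \<Rightarrow> 'n list \<Rightarrow> 'k" and J \<beta>
  assume F: "\<forall>J \<beta>. fin_supp (F J \<beta>)"
  note conj = hat_partial_conj[OF xi_surj]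
  define P where "P I = Phi_map phi (F I \<beta>)" for I
  have dF: "fin_supp (twisted_d phi F I \<beta>) \<and>
      Phi_map phi (twisted_d phi F I \<beta>) = ext_d poly_deriv P I" for I
    unfolding twisted_d_eq_ext_d P_def by (intro Phi_map_ext_d conj) (use F in blast)
  have "fin_supp (twisted_d phi (twisted_d phi F) J \<beta>) \<and>
      Phi_map phi (twisted_d phi (twisted_d phi F) J \<beta>)
        = ext_d poly_deriv (\<lambda>I. Phi_map phi (twisted_d phi F I \<beta>)) J"
    unfolding twisted_d_eq_ext_d[of _ "twisted_d phi F"] by (intro Phi_map_ext_d conj) (use dF in blast)
  then have "fin_supp (twisted_d phi (twisted_d phi F) J \<beta>) \<and>
      Phi_map phi (twisted_d phi (twisted_d phi F) J \<beta>) = ext_d poly_deriv (ext_d poly_deriv P) J"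
    using dF by simp
  moreover have "ext_d poly_deriv (ext_d poly_deriv P) = 0"
    by (rule ext_d_ext_d) (simp_all add: poly_deriv_add poly_deriv_commute)
  ultimately show "twisted_d phi (twisted_d phi F) J \<beta> \<in> UIdeal c"
    using xi_inj by auto
qed

end
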